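(* Let $0\le a<b<1$ and let $\varrho\ge0$ be a function on $[a,b]$ such that $\varrho/\zeta$ is non-decreasing and bounded on $[a,b]$. Then (i) $$\big(b\zeta(b)-a\zeta(a)\big)\,\hat m(\varrho/\zeta,a,b)\le 2+a\widetilde\varrho(a+)+b\widetilde\varrho(b-),$$ and (ii) equality holds in (i) if and only if $\varrho\equiv0$ on $[a,b)$.
   Context: $\zeta(t)=\frac{2}{1-t^2}$, $\hat\varrho(t)=t\zeta(t)$ (so $\hat\varrho=\zeta'/\zeta$), and $\widetilde\varrho=\hat\varrho+\varrho$; $\widetilde\varrho(a+)=a\zeta(a)+\lim_{t\downarrow a}\varrho(t)$ and $\widetilde\varrho(b-)=b\zeta(b)+\lim_{t\uparrow b}\varrho(t)$. With $h$ a primitive of $\varrho$, $\psi=e^h$, $\mathtt f(x)=x\zeta(x)^2\psi(x)$, $\mathtt g(x)=x\zeta(x)\psi(x)$, define $\hat m(\varrho/\zeta,a,b):=\frac{\mathtt g(a)+\mathtt g(b)}{\int_a^b\mathtt f\,dt}$. *)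

theory Defs
  imports "HOL-Analysis.Analysis"
begin

definition zeta :: "real \<Rightarrow> real" where
  "zeta t = 2 / (1 - t\<^sup>2)"

definition rho_hat :: "real \<Rightarrow> real" where
  "rho_hat t = t * zeta t"

text \<open>One-sided limits of rho_tilde = rho_hat + rho at the endpoints.\<close>
definition rho_tilde_right :: "(real \<Rightarrow> real) \<Rightarrow> real \<Rightarrow> real" where
  "rho_tilde_right rho a = a * zeta a + Lim (at_right a) rho"

definition rho_tilde_left :: "(real \<Rightarrow> real) \<Rightarrow> real \<Rightarrow> real" where
  "rho_tilde_left rho b = b * zeta b + Lim (at_left b) rho"

text \<open>m_hat takes q = rho/zeta as argument; rho = q * zeta.
  The primitive h of rho is taken as h x = integral over [a,x] of rho
  (the quotient does not depend on the additive constant).\<close>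
definition mhat :: "(real \<Rightarrow> real) \<Rightarrow> real \<Rightarrow> real \<Rightarrow> real" where
  "mhat q a b =
    (let rho = (\<lambda>t. q t * zeta t);
         psi = (\<lambda>x. exp (integral {a..x} rho));
         f = (\<lambda>x. x * (zeta x)\<^sup>2 * psi x);
         g = (\<lambda>x. x * zeta x * psi x)
     in (g a + g b) / integral {a..b} f)"

end

theory Submission
  imports Defs
begin

(* Write S t = t * zeta t, h t for the integral of rho over [a, t], and q for the supremum of
   rho / zeta on [a, b), so that rho <= q * zeta there.  Since t^2 * zeta t = zeta t - 2, the
   right-hand side equals R + a * rho(a+) with R = zeta a + zeta b - 2 + q * S b, and it suffices to
   show (S b - S a) * (S a + S b * exp (h b)) <= R * I with I the integral of t * zeta(t)^2 * exp (h t)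
   over [a, b], strictly if q > 0.
   The function pivot a b t, affine in zeta t, is negative at a and positive at b; split [a, b] at
   a zero c.  On [a, c] only exp h >= 1 is used: since zeta' = t * zeta^2, the integral is at least
   zeta c - zeta a, and (zeta a + zeta b - 2) * (zeta c - zeta a) = S a * (S b - S a).
   On [c, b], rho <= q * zeta gives exp (h t) >= exp (h b - q * (Z b - Z t)) with Z = 2 * artanh a
   primitive of zeta, and the rational inequality pivot a b t <= S b * S t bounds the derivative of
   pivot a b * exp (q * Z) by R * t * zeta(t)^2 * exp (q * Z t); integrating from c gives
   exp (h b) * pivot a b b <= R times the integral over [c, b].  Adding the two pieces proves the
   inequality.  If q = 0 then rho vanishes on [a, b) and both sides equal zeta a + zeta b - 2. *)

lemma zeta_pos: "\<bar>t\<bar> < 1 \<Longrightarrow> 0 < zeta t"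
  by (simp add: zeta_def abs_square_less_1)

lemma power2_mult_zeta: "\<bar>t\<bar> < 1 \<Longrightarrow> t\<^sup>2 * zeta t = zeta t - 2"
proof -
  assume "\<bar>t\<bar> < 1"
  then have "t\<^sup>2 < 1" by (simp add: abs_square_less_1)
  then have "1 - t\<^sup>2 \<noteq> 0" by linarith
  then show ?thesis by (simp add: zeta_def field_simps)
qed

lemma mult_zeta_power2: "\<bar>t\<bar> < 1 \<Longrightarrow> (t * zeta t)\<^sup>2 = zeta t * (zeta t - 2)"
proof -
  have "(t * zeta t)\<^sup>2 = t\<^sup>2 * zeta t * zeta t" by (simp add: power2_eq_square)
  also assume "\<bar>t\<bar> < 1"
  then have "t\<^sup>2 * zeta t * zeta t = zeta t * (zeta t - 2)" by (simp add: power2_mult_zeta)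
  finally show ?thesis .
qed

lemma zeta_mono: "0 \<le> s \<Longrightarrow> s \<le> t \<Longrightarrow> t < 1 \<Longrightarrow> zeta s \<le> zeta t"
  unfolding zeta_def by (intro divide_left_mono mult_pos_pos) (auto simp: power_mono abs_square_less_1)

lemma zeta_strict_mono: "0 \<le> s \<Longrightarrow> s < t \<Longrightarrow> t < 1 \<Longrightarrow> zeta s < zeta t"
  unfolding zeta_def
  by (intro divide_strict_left_mono mult_pos_pos) (auto simp: power_strict_mono abs_square_less_1)

lemma mult_zeta_strict_mono: "0 \<le> s \<Longrightarrow> s < t \<Longrightarrow> t < 1 \<Longrightarrow> s * zeta s < t * zeta t"
proof -
  assume st: "0 \<le> s" "s < t" "t < 1"
  then have "s * zeta s \<le> s * zeta t" by (intro mult_left_mono zeta_mono) auto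
  also have "\<dots> < t * zeta t" using st zeta_pos[of t] by simp
  finally show ?thesis .
qed

lemma continuous_on_zeta: "S \<subseteq> {-1<..<1} \<Longrightarrow> continuous_on S zeta"
  unfolding zeta_def[abs_def]
proof (intro continuous_intros ballI)
  fix t assume "S \<subseteq> {-1<..<1}" "t \<in> S"
  then have "\<bar>t\<bar> < 1" by (auto simp: abs_less_iff)
  then have "t\<^sup>2 < 1" by (simp add: abs_square_less_1)
  then show "1 - t\<^sup>2 \<noteq> 0" by linarith
qed

lemma has_real_derivative_zeta: "\<bar>t\<bar> < 1 \<Longrightarrow> (zeta has_real_derivative t * (zeta t)\<^sup>2) (at t)"
proof -
  assume "\<bar>t\<bar> < 1"
  then have "t\<^sup>2 < 1" by (simp add: abs_square_less_1)
  then have "1 - t\<^sup>2 \<noteq> 0" by linarith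
  then have "((\<lambda>t. 2 / (1 - t\<^sup>2)) has_real_derivative t * (2 / (1 - t\<^sup>2))\<^sup>2) (at t)"
    by (auto intro!: derivative_eq_intros simp: field_simps power2_eq_square)
  then show ?thesis unfolding zeta_def[abs_def] .
qed

lemma has_real_derivative_two_artanh: "\<bar>t\<bar> < 1 \<Longrightarrow> ((\<lambda>t. 2 * artanh t) has_real_derivative zeta t) (at t)"
  by (auto intro!: derivative_eq_intros simp: zeta_def)

lemma has_integral_zeta:
  assumes "-1 < x" "x \<le> y" "y < 1"
  shows "(zeta has_integral 2 * artanh y - 2 * artanh x) {x..y}"
  using assms has_real_derivative_two_artanh
  by (intro fundamental_theorem_of_calculus)
     (auto simp: has_real_derivative_iff_has_vector_derivative[symmetric] intro: has_field_derivative_at_within)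

lemma has_integral_zeta_derivative:
  assumes "-1 < x" "x \<le> y" "y < 1"
  shows "((\<lambda>t. t * (zeta t)\<^sup>2) has_integral zeta y - zeta x) {x..y}"
  using assms has_real_derivative_zeta
  by (intro fundamental_theorem_of_calculus)
     (auto simp: has_real_derivative_iff_has_vector_derivative[symmetric] intro: has_field_derivative_at_within)

definition pivot :: "real \<Rightarrow> real \<Rightarrow> real \<Rightarrow> real" where
  "pivot a b t = (zeta a + zeta b - 2) * (zeta t - zeta b) + (b * zeta b - a * zeta a) * (b * zeta b)"

lemma pivot_left:
  assumes "\<bar>a\<bar> < 1" "\<bar>b\<bar> < 1"
  shows "pivot a b a = - (a * zeta a) * (b * zeta b - a * zeta a)"
proof -
  have "(zeta a + zeta b - 2) * (zeta a - zeta b) = (a * zeta a)\<^sup>2 - (b * zeta b)\<^sup>2"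
    unfolding mult_zeta_power2[OF assms(1)] mult_zeta_power2[OF assms(2)] by (simp add: algebra_simps)
  then show ?thesis unfolding pivot_def by (simp add: algebra_simps power2_eq_square)
qed

lemma pivot_right: "pivot a b b = (b * zeta b - a * zeta a) * (b * zeta b)"
  by (simp add: pivot_def)

lemma continuous_on_pivot: "S \<subseteq> {-1<..<1} \<Longrightarrow> continuous_on S (pivot a b)"
  unfolding pivot_def[abs_def] by (intro continuous_intros continuous_on_zeta)

lemma mult_zeta_minus_pivot:
  fixes a b t :: real
  assumes "\<bar>a\<bar> < 1" "\<bar>b\<bar> < 1" "\<bar>t\<bar> < 1"
  shows "b * zeta b * (t * zeta t) - pivot a b t
         = 4 * ((b - t) * (a\<^sup>2 * b + t) + a * b * (1 - t\<^sup>2)) / ((1 - a\<^sup>2) * (1 - b\<^sup>2) * (1 - t\<^sup>2))"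
proof -
  define A B T where "A = 1 - a\<^sup>2" and "B = 1 - b\<^sup>2" and "T = 1 - t\<^sup>2"
  have "a\<^sup>2 < 1" "b\<^sup>2 < 1" "t\<^sup>2 < 1" using assms by (simp_all add: abs_square_less_1)
  then have nz: "A \<noteq> 0" "B \<noteq> 0" "T \<noteq> 0" by (simp_all add: A_def B_def T_def)
  have ze: "zeta a = 2 / A" "zeta b = 2 / B" "zeta t = 2 / T" by (simp_all add: zeta_def A_def B_def T_def)
  have "b * zeta b * (t * zeta t) - pivot a b t = 4 * ((b - t) * (a\<^sup>2 * b + t) + a * b * T) * B / (A * B * B * T)"
    unfolding pivot_def ze using nz by (simp add: field_simps) (unfold A_def B_def T_def, algebra)
  with \<open>B \<noteq> 0\<close> show ?thesis by (simp add: A_def B_def T_def)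
qed

lemma pivot_le_mult_zeta:
  fixes a b t :: real
  assumes "0 \<le> a" "a \<le> b" "b < 1" "0 \<le> t" "t \<le> b"
  shows "pivot a b t \<le> b * zeta b * (t * zeta t)"
    and "0 < t \<Longrightarrow> t < b \<Longrightarrow> pivot a b t < b * zeta b * (t * zeta t)"
proof -
  define N where "N = (b - t) * (a\<^sup>2 * b + t) + a * b * (1 - t\<^sup>2)"
  define D where "D = (1 - a\<^sup>2) * (1 - b\<^sup>2) * (1 - t\<^sup>2)"
  have "a\<^sup>2 < 1" "b\<^sup>2 < 1" "t\<^sup>2 < 1" using assms by (simp_all add: abs_square_less_1)
  then have "0 < D" unfolding D_def by simp
  have gap: "b * zeta b * (t * zeta t) - pivot a b t = 4 * N / D"
    unfolding N_def D_def using assms by (intro mult_zeta_minus_pivot) auto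
  have "0 \<le> a * b * (1 - t\<^sup>2)" using assms \<open>t\<^sup>2 < 1\<close> by simp
  moreover have "0 \<le> (b - t) * (a\<^sup>2 * b + t)" using assms by simp
  ultimately have "0 \<le> 4 * N / D" unfolding N_def using \<open>0 < D\<close> by simp
  with gap show "pivot a b t \<le> b * zeta b * (t * zeta t)" by linarith
  assume "0 < t" "t < b"
  then have "0 < (b - t) * (a\<^sup>2 * b + t)" using assms by (intro mult_pos_pos add_nonneg_pos) auto
  with \<open>0 \<le> a * b * (1 - t\<^sup>2)\<close> have "0 < 4 * N / D" unfolding N_def using \<open>0 < D\<close> by simp
  with gap show "pivot a b t < b * zeta b * (t * zeta t)" by linarith
qed

lemma pivot_root:
  assumes "0 \<le> a" "a < b" "b < 1"
  obtains c where "a \<le> c" "c < b" "pivot a b c = 0"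
proof -
  have gap: "0 < b * zeta b - a * zeta a" using assms mult_zeta_strict_mono by simp
  have "0 \<le> a * zeta a" using assms zeta_pos[of a] by simp
  with gap have "pivot a b a \<le> 0" using assms by (simp add: pivot_left)
  moreover have "0 < pivot a b b" using gap assms zeta_pos[of b] by (simp add: pivot_right)
  moreover have "continuous_on {a..b} (pivot a b)" using assms by (intro continuous_on_pivot) auto
  ultimately obtain c where "a \<le> c" "c \<le> b" "pivot a b c = 0"
    using IVT'[of "pivot a b" a 0 b] assms by auto
  with \<open>0 < pivot a b b\<close> show thesis by (intro that) (auto simp: order.order_iff_strict)
qed

lemma has_real_derivative_pivot_exp:
  assumes "\<bar>t\<bar> < 1"
  shows "((\<lambda>s. pivot a b s * exp (q * (2 * artanh s))) has_real_derivative
           ((zeta a + zeta b - 2) * (t * (zeta t)\<^sup>2) + q * zeta t * pivot a b t) * exp (q * (2 * artanh t)))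
         (at t)"
proof -
  have "(pivot a b has_real_derivative (zeta a + zeta b - 2) * (t * (zeta t)\<^sup>2 - 0) + 0) (at t)"
    unfolding pivot_def[abs_def]
    by (intro DERIV_add DERIV_cmult DERIV_diff has_real_derivative_zeta[OF assms] DERIV_const)
  moreover have "((\<lambda>s. exp (q * (2 * artanh s))) has_real_derivative exp (q * (2 * artanh t)) * (q * zeta t)) (at t)"
    by (intro DERIV_fun_exp DERIV_cmult has_real_derivative_two_artanh[OF assms])
  ultimately show ?thesis
    by (rule DERIV_mult[THEN DERIV_cong]) (simp add: algebra_simps)
qed

lemma has_integral_pivot_exp:
  assumes "-1 < c" "c \<le> b" "b < 1" "pivot a b c = 0"
  shows "((\<lambda>t. ((zeta a + zeta b - 2) * (t * (zeta t)\<^sup>2) + q * zeta t * pivot a b t)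
            * exp (q * (2 * artanh t)))
          has_integral pivot a b b * exp (q * (2 * artanh b))) {c..b}"
proof -
  have "((\<lambda>t. ((zeta a + zeta b - 2) * (t * (zeta t)\<^sup>2) + q * zeta t * pivot a b t)
            * exp (q * (2 * artanh t)))
      has_integral pivot a b b * exp (q * (2 * artanh b)) - pivot a b c * exp (q * (2 * artanh c))) {c..b}"
    using assms has_real_derivative_pivot_exp
    by (intro fundamental_theorem_of_calculus)
       (auto simp: has_real_derivative_iff_has_vector_derivative[symmetric] intro: has_field_derivative_at_within)
  with assms show ?thesis by simp
qed

lemma pivot_derivative_le:
  assumes "0 \<le> a" "a \<le> b" "b < 1" "0 \<le> t" "t \<le> b" "0 \<le> q"
  shows "(zeta a + zeta b - 2) * (t * (zeta t)\<^sup>2) + q * zeta t * pivot a b t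
           \<le> (zeta a + zeta b - 2 + q * (b * zeta b)) * (t * (zeta t)\<^sup>2)"
    and "0 < q \<Longrightarrow> 0 < t \<Longrightarrow> t < b \<Longrightarrow>
         (zeta a + zeta b - 2) * (t * (zeta t)\<^sup>2) + q * zeta t * pivot a b t
           < (zeta a + zeta b - 2 + q * (b * zeta b)) * (t * (zeta t)\<^sup>2)"
proof -
  have rhs: "(zeta a + zeta b - 2 + q * (b * zeta b)) * (t * (zeta t)\<^sup>2)
      = (zeta a + zeta b - 2) * (t * (zeta t)\<^sup>2) + q * zeta t * (b * zeta b * (t * zeta t))"
    by (simp add: algebra_simps power2_eq_square)
  have "0 < zeta t" using assms by (intro zeta_pos) auto
  then show "(zeta a + zeta b - 2) * (t * (zeta t)\<^sup>2) + q * zeta t * pivot a b t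
      \<le> (zeta a + zeta b - 2 + q * (b * zeta b)) * (t * (zeta t)\<^sup>2)"
    unfolding rhs using assms pivot_le_mult_zeta(1)[of a b t] by (simp add: mult_left_mono)
  assume "0 < q" "0 < t" "t < b"
  with \<open>0 < zeta t\<close> show "(zeta a + zeta b - 2) * (t * (zeta t)\<^sup>2) + q * zeta t * pivot a b t
      < (zeta a + zeta b - 2 + q * (b * zeta b)) * (t * (zeta t)\<^sup>2)"
    unfolding rhs using assms pivot_le_mult_zeta(2)[of a b t] by simp
qed

lemma zeta_diff_le_integral:
  assumes "0 \<le> x" "x \<le> y" "y < 1" "continuous_on {x..y} w" "\<forall>t\<in>{x..y}. 1 \<le> w t"
  shows "zeta y - zeta x \<le> integral {x..y} (\<lambda>t. t * (zeta t)\<^sup>2 * w t)"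
proof -
  have zeta': "((\<lambda>t. t * (zeta t)\<^sup>2) has_integral zeta y - zeta x) {x..y}"
    using assms by (intro has_integral_zeta_derivative) auto
  have "continuous_on {x..y} (\<lambda>t. t * (zeta t)\<^sup>2 * w t)"
    using assms by (intro continuous_intros continuous_on_zeta) auto
  then have "(\<lambda>t. t * (zeta t)\<^sup>2 * w t) integrable_on {x..y}"
    by (rule integrable_continuous_interval)
  moreover have "t * (zeta t)\<^sup>2 * 1 \<le> t * (zeta t)\<^sup>2 * w t" if "t \<in> {x..y}" for t
    using that assms by (intro mult_left_mono) auto
  ultimately have "integral {x..y} (\<lambda>t. t * (zeta t)\<^sup>2) \<le> integral {x..y} (\<lambda>t. t * (zeta t)\<^sup>2 * w t)"
    using zeta' by (intro integral_le) auto
  then show ?thesis using integral_unique[OF zeta'] by simp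
qed

lemma integral_le_artanh:
  fixes rho :: "real \<Rightarrow> real"
  assumes "-1 < t" "t \<le> b" "b < 1" "rho integrable_on {t..b}" "\<forall>s\<in>{t..<b}. rho s \<le> q * zeta s"
  shows "integral {t..b} rho \<le> q * (2 * artanh b - 2 * artanh t)"
proof -
  have spike: "min (rho s) (q * zeta s) = rho s" if "s \<in> {t..b} - {b}" for s
    using that assms by auto
  have q_zeta: "((\<lambda>s. q * zeta s) has_integral q * (2 * artanh b - 2 * artanh t)) {t..b}"
    using assms by (intro has_integral_mult_right has_integral_zeta)
  have "integral {t..b} rho = integral {t..b} (\<lambda>s. min (rho s) (q * zeta s))"
    using spike by (intro integral_spike[of "{b}"]) auto
  also have "\<dots> \<le> integral {t..b} (\<lambda>s. q * zeta s)"
  proof (rule integral_le)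
    show "(\<lambda>s. min (rho s) (q * zeta s)) integrable_on {t..b}"
      by (rule integrable_spike[OF assms(4), of "{b}"]) (use spike in auto)
  qed (use q_zeta in auto)
  also have "\<dots> = q * (2 * artanh b - 2 * artanh t)"
    by (rule integral_unique[OF q_zeta])
  finally show ?thesis .
qed

lemma zeta_add_zeta_gt_2:
  assumes "\<bar>a\<bar> < 1" "\<bar>b\<bar> < 1"
  shows "2 < zeta a + zeta b"
proof -
  have "zeta a + zeta b - 2 = 2 + a\<^sup>2 * zeta a + b\<^sup>2 * zeta b"
    using assms by (simp add: power2_mult_zeta)
  moreover have "0 \<le> a\<^sup>2 * zeta a" "0 \<le> b\<^sup>2 * zeta b"
    using assms zeta_pos by (simp_all add: less_imp_le)
  ultimately show ?thesis by linarith
qed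

lemma pivot_right_le_integral:
  assumes "0 \<le> a" "a \<le> b" "0 \<le> c" "c < b" "b < 1" "pivot a b c = 0" "0 \<le> q" "0 < K"
    and "continuous_on {c..b} w" "\<forall>t\<in>{c..b}. K * exp (q * (2 * artanh t)) \<le> w t"
  defines "R \<equiv> zeta a + zeta b - 2 + q * (b * zeta b)"
  shows "K * exp (q * (2 * artanh b)) * pivot a b b \<le> R * integral {c..b} (\<lambda>t. t * (zeta t)\<^sup>2 * w t)"
    and "0 < q \<Longrightarrow> K * exp (q * (2 * artanh b)) * pivot a b b < R * integral {c..b} (\<lambda>t. t * (zeta t)\<^sup>2 * w t)"
proof -
  define m where "m t = exp (q * (2 * artanh t))" for t
  define D where "D t = (zeta a + zeta b - 2) * (t * (zeta t)\<^sup>2) + q * zeta t * pivot a b t" for t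
  define G where "G t = K * m t * D t" for t
  define F where "F t = R * (t * (zeta t)\<^sup>2) * w t" for t
  have sub: "{c..b} \<subseteq> {-1<..<1}" using assms by auto
  have "((\<lambda>t. K * (D t * m t)) has_integral K * (pivot a b b * m b)) {c..b}"
    unfolding D_def m_def using assms by (intro has_integral_mult_right has_integral_pivot_exp) auto
  then have G_int: "(G has_integral K * m b * pivot a b b) {c..b}"
    unfolding G_def[abs_def] by (simp add: mult_ac)
  have "2 < zeta a + zeta b" using assms by (intro zeta_add_zeta_gt_2) auto
  moreover have "0 \<le> q * (b * zeta b)" using assms zeta_pos[of b] by simp
  ultimately have "0 < R" unfolding R_def by linarith
  have Km: "0 < K * m t" for t using assms by (simp add: m_def)
  have GF: "G t \<le> K * m t * (R * (t * (zeta t)\<^sup>2))" "K * m t * (R * (t * (zeta t)\<^sup>2)) \<le> F t"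
    if "t \<in> {c..b}" for t
  proof -
    have "D t \<le> R * (t * (zeta t)\<^sup>2)"
      unfolding D_def R_def using assms that by (intro pivot_derivative_le(1)) auto
    then show "G t \<le> K * m t * (R * (t * (zeta t)\<^sup>2))"
      unfolding G_def using Km[of t] by (intro mult_left_mono) auto
    have "K * m t \<le> w t" using assms that by (simp add: m_def)
    moreover have "0 \<le> R * (t * (zeta t)\<^sup>2)" using \<open>0 < R\<close> that assms by simp
    ultimately show "K * m t * (R * (t * (zeta t)\<^sup>2)) \<le> F t"
      unfolding F_def by (metis mult.commute mult_left_mono)
  qed
  have F_cont: "continuous_on {c..b} F"
    unfolding F_def using sub assms by (intro continuous_intros continuous_on_zeta) auto
  have "K * m b * pivot a b b \<le> integral {c..b} F"
    using G_int integrable_continuous_interval[OF F_cont] GF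
    by (intro has_integral_le[OF G_int integrable_integral]) (auto intro: order_trans)
  then show "K * exp (q * (2 * artanh b)) * pivot a b b \<le> R * integral {c..b} (\<lambda>t. t * (zeta t)\<^sup>2 * w t)"
    unfolding F_def m_def by (simp add: mult.assoc)
  assume "0 < q"
  have G_less: "G t < K * m t * (R * (t * (zeta t)\<^sup>2))" if "t \<in> {c<..<b}" for t
  proof -
    have "D t < R * (t * (zeta t)\<^sup>2)"
      unfolding D_def R_def using assms that \<open>0 < q\<close> by (intro pivot_derivative_le(2)) auto
    then show ?thesis unfolding G_def using Km[of t] by (intro mult_strict_left_mono)
  qed
  have G_cont: "continuous_on {c..b} G"
    unfolding G_def D_def m_def using sub
    by (intro continuous_intros continuous_on_zeta continuous_on_pivot) (auto simp: subset_eq)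
  have "integral {c..b} G < integral {c..b} F"
  proof (rule integral_less_real[OF G_cont F_cont])
    fix t assume t: "t \<in> {c<..<b}"
    then have "t \<in> {c..b}" by auto
    with t show "G t < F t" using G_less GF(2) by (meson less_le_trans)
  qed (use assms in simp)
  then show "K * exp (q * (2 * artanh b)) * pivot a b b < R * integral {c..b} (\<lambda>t. t * (zeta t)\<^sup>2 * w t)"
    using integral_unique[OF G_int] unfolding F_def m_def by (simp add: mult.assoc)
qed

lemma pivot_left_le_integral:
  assumes "0 \<le> a" "a \<le> c" "c \<le> b" "b < 1" "pivot a b c = 0" "0 \<le> q"
    and "continuous_on {a..c} w" "\<forall>t\<in>{a..c}. 1 \<le> w t"
  defines "R \<equiv> zeta a + zeta b - 2 + q * (b * zeta b)"
  shows "a * zeta a * (b * zeta b - a * zeta a) \<le> R * integral {a..c} (\<lambda>t. t * (zeta t)\<^sup>2 * w t)"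
proof -
  have "2 < zeta a + zeta b" using assms by (intro zeta_add_zeta_gt_2) auto
  moreover have "0 \<le> q * (b * zeta b)" using assms zeta_pos[of b] by simp
  ultimately have "0 \<le> zeta a + zeta b - 2" "zeta a + zeta b - 2 \<le> R" unfolding R_def by linarith+
  have "a * zeta a * (b * zeta b - a * zeta a) = (zeta a + zeta b - 2) * (zeta c - zeta a)"
    using pivot_left[of a b] assms unfolding pivot_def by (simp add: algebra_simps)
  also have "\<dots> \<le> R * (zeta c - zeta a)"
    using \<open>zeta a + zeta b - 2 \<le> R\<close> assms zeta_mono[of a c] by (intro mult_right_mono) auto
  also have "\<dots> \<le> R * integral {a..c} (\<lambda>t. t * (zeta t)\<^sup>2 * w t)"
    using \<open>0 \<le> zeta a + zeta b - 2\<close> \<open>zeta a + zeta b - 2 \<le> R\<close> assms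
    by (intro mult_left_mono zeta_diff_le_integral) auto
  finally show ?thesis .
qed

lemma weighted_integral_lower_bound:
  fixes rho :: "real \<Rightarrow> real"
  assumes "0 \<le> a" "a < b" "b < 1" "\<forall>t\<in>{a..b}. 0 \<le> rho t" "rho integrable_on {a..b}"
    and "\<forall>t\<in>{a..<b}. rho t \<le> q * zeta t" "0 \<le> q"
  defines "H \<equiv> \<lambda>x. integral {a..x} rho"
    and "R \<equiv> zeta a + zeta b - 2 + q * (b * zeta b)"
  shows "(b * zeta b - a * zeta a) * (a * zeta a + b * zeta b * exp (H b))
           \<le> R * integral {a..b} (\<lambda>x. x * (zeta x)\<^sup>2 * exp (H x))"
    and "0 < q \<Longrightarrow> (b * zeta b - a * zeta a) * (a * zeta a + b * zeta b * exp (H b))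
           < R * integral {a..b} (\<lambda>x. x * (zeta x)\<^sup>2 * exp (H x))"
proof -
  define f where "f x = x * (zeta x)\<^sup>2 * exp (H x)" for x
  have exp_H_cont: "continuous_on {a..b} (\<lambda>x. exp (H x))"
    unfolding H_def by (intro continuous_intros indefinite_integral_continuous_1 assms(5))
  obtain c where c: "a \<le> c" "c < b" "pivot a b c = 0"
    using pivot_root assms by blast
  have "0 \<le> H x" if "x \<in> {a..b}" for x
    unfolding H_def using that assms(4) by (intro integral_nonneg integrable_on_subinterval[OF assms(5)]) auto
  then have left: "a * zeta a * (b * zeta b - a * zeta a) \<le> R * integral {a..c} f"
    unfolding R_def f_def using assms c
    by (intro pivot_left_le_integral continuous_on_subset[OF exp_H_cont]) auto
  define K where "K = exp (H b - q * (2 * artanh b))"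
  have "K * exp (q * (2 * artanh t)) \<le> exp (H t)" if "t \<in> {c..b}" for t
  proof -
    have "H t + integral {t..b} rho = H b" "integral {t..b} rho \<le> q * (2 * artanh b - 2 * artanh t)"
      unfolding H_def using that c assms
      by (auto intro!: Henstock_Kurzweil_Integration.integral_combine integral_le_artanh
          integrable_on_subinterval[OF assms(5)])
    then show ?thesis unfolding K_def by (simp flip: exp_add add: algebra_simps)
  qed
  moreover have "exp (H b) = K * exp (q * (2 * artanh b))" unfolding K_def by (simp flip: exp_add)
  moreover have "continuous_on {c..b} (\<lambda>x. exp (H x))" using c by (intro continuous_on_subset[OF exp_H_cont]) auto
  ultimately have right: "exp (H b) * pivot a b b \<le> R * integral {c..b} f"
    and right_strict: "0 < q \<Longrightarrow> exp (H b) * pivot a b b < R * integral {c..b} f"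
    unfolding R_def f_def using pivot_right_le_integral[of a b c q K "\<lambda>x. exp (H x)"] assms c
    by (simp_all add: K_def)
  have "continuous_on {a..b} (\<lambda>x. x * (zeta x)\<^sup>2)"
    using assms by (intro continuous_intros continuous_on_zeta) auto
  then have "continuous_on {a..b} f" unfolding f_def using exp_H_cont by (rule continuous_on_mult)
  then have "integral {a..c} f + integral {c..b} f = integral {a..b} f"
    using c by (intro Henstock_Kurzweil_Integration.integral_combine integrable_continuous_interval) auto
  then have split: "R * integral {a..b} f = R * integral {a..c} f + R * integral {c..b} f"
    by (metis distrib_left)
  have num: "(b * zeta b - a * zeta a) * (a * zeta a + b * zeta b * exp (H b))
      = a * zeta a * (b * zeta b - a * zeta a) + exp (H b) * pivot a b b"
    unfolding pivot_right by (simp add: algebra_simps)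
  show "(b * zeta b - a * zeta a) * (a * zeta a + b * zeta b * exp (H b))
           \<le> R * integral {a..b} (\<lambda>x. x * (zeta x)\<^sup>2 * exp (H x))"
    and "0 < q \<Longrightarrow> (b * zeta b - a * zeta a) * (a * zeta a + b * zeta b * exp (H b))
           < R * integral {a..b} (\<lambda>x. x * (zeta x)\<^sup>2 * exp (H x))"
    unfolding num f_def[abs_def, symmetric] using left right right_strict split by linarith+
qed

lemma mhat_eq:
  fixes rho :: "real \<Rightarrow> real"
  assumes "-1 < a" "a \<le> b" "b < 1"
  shows "mhat (\<lambda>t. rho t / zeta t) a b
           = (a * zeta a + b * zeta b * exp (integral {a..b} rho))
             / integral {a..b} (\<lambda>x. x * (zeta x)\<^sup>2 * exp (integral {a..x} rho))"
proof -
  have eq: "integral {a..x} (\<lambda>t. rho t / zeta t * zeta t) = integral {a..x} rho" if "x \<le> b" for x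
  proof (rule integral_cong)
    fix t assume "t \<in> {a..x}"
    then have "0 < zeta t" using that assms by (intro zeta_pos) auto
    then show "rho t / zeta t * zeta t = rho t" by simp
  qed
  have "integral {a..b} (\<lambda>x. x * (zeta x)\<^sup>2 * exp (integral {a..x} (\<lambda>t. rho t / zeta t * zeta t)))
      = integral {a..b} (\<lambda>x. x * (zeta x)\<^sup>2 * exp (integral {a..x} rho))"
    by (rule integral_cong) (simp only: eq atLeastAtMost_iff)
  then show ?thesis unfolding mhat_def Let_def eq[OF assms(2)] eq[OF order_refl] by simp
qed

lemma mult_mhat_le:
  fixes rho :: "real \<Rightarrow> real"
  assumes "0 \<le> a" "a < b" "b < 1" "\<forall>t\<in>{a..b}. 0 \<le> rho t" "rho integrable_on {a..b}"
    and "\<forall>t\<in>{a..<b}. rho t \<le> q * zeta t"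
  defines "R \<equiv> zeta a + zeta b - 2 + q * (b * zeta b)"
  shows "(b * zeta b - a * zeta a) * mhat (\<lambda>t. rho t / zeta t) a b \<le> R"
    and "0 < q \<Longrightarrow> (b * zeta b - a * zeta a) * mhat (\<lambda>t. rho t / zeta t) a b < R"
proof -
  define N where "N = (b * zeta b - a * zeta a) * (a * zeta a + b * zeta b * exp (integral {a..b} rho))"
  define I where "I = integral {a..b} (\<lambda>x. x * (zeta x)\<^sup>2 * exp (integral {a..x} rho))"
  have "0 \<le> rho a" "rho a \<le> q * zeta a" using assms by auto
  then have "0 \<le> q * zeta a" by linarith
  then have "0 \<le> q" using assms zeta_pos[of a] by (simp add: zero_le_mult_iff)
  then have bound: "N \<le> R * I" "0 < q \<Longrightarrow> N < R * I"
    unfolding N_def I_def R_def using weighted_integral_lower_bound[OF assms(1-6)] by simp_all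
  have "2 < zeta a + zeta b" using assms by (intro zeta_add_zeta_gt_2) auto
  with \<open>0 \<le> q\<close> have "0 < R" unfolding R_def using assms zeta_pos[of b] by (simp add: add_pos_nonneg)
  have "0 < b * zeta b - a * zeta a" using assms mult_zeta_strict_mono by simp
  moreover have "0 \<le> a * zeta a" "0 < b * zeta b" using assms zeta_pos[of a] zeta_pos[of b] by simp_all
  ultimately have "0 < N" unfolding N_def by (simp add: add_nonneg_pos)
  with bound(1) have "0 < R * I" by linarith
  with \<open>0 < R\<close> have "0 < I" by (simp add: zero_less_mult_iff)
  have lhs: "(b * zeta b - a * zeta a) * mhat (\<lambda>t. rho t / zeta t) a b = N / I"
    unfolding N_def I_def using assms by (simp add: mhat_eq)
  show "(b * zeta b - a * zeta a) * mhat (\<lambda>t. rho t / zeta t) a b \<le> R"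
    and "0 < q \<Longrightarrow> (b * zeta b - a * zeta a) * mhat (\<lambda>t. rho t / zeta t) a b < R"
    unfolding lhs using bound \<open>0 < I\<close> by (simp_all add: pos_divide_le_eq pos_divide_less_eq mult.commute)
qed

lemma mult_mhat_zero:
  fixes rho :: "real \<Rightarrow> real"
  assumes "0 \<le> a" "a < b" "b < 1" "\<forall>t\<in>{a..<b}. rho t = 0"
  shows "(b * zeta b - a * zeta a) * mhat (\<lambda>t. rho t / zeta t) a b = zeta a + zeta b - 2"
proof -
  have H: "integral {a..x} rho = 0" if "x \<le> b" for x
  proof -
    have "integral {a..x} rho = integral {a..x} (\<lambda>_. 0)"
      using that assms by (intro integral_spike[of "{b}"]) auto
    then show ?thesis by simp
  qed
  have "integral {a..b} (\<lambda>x. x * (zeta x)\<^sup>2 * exp (integral {a..x} rho))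
      = integral {a..b} (\<lambda>x. x * (zeta x)\<^sup>2)"
    by (rule integral_cong) (simp add: H)
  also have "\<dots> = zeta b - zeta a"
    using assms by (intro integral_unique has_integral_zeta_derivative) auto
  finally have "mhat (\<lambda>t. rho t / zeta t) a b = (a * zeta a + b * zeta b) / (zeta b - zeta a)"
    using assms by (simp add: mhat_eq H)
  moreover have "(b * zeta b - a * zeta a) * (a * zeta a + b * zeta b) = (zeta a + zeta b - 2) * (zeta b - zeta a)"
    using assms mult_zeta_power2[of a] mult_zeta_power2[of b]
    by (simp add: algebra_simps power2_eq_square)
  moreover have "zeta a < zeta b" using assms by (intro zeta_strict_mono)
  ultimately show ?thesis by simp
qed

lemma tendsto_at_left_Sup_mono_on:
  fixes f :: "real \<Rightarrow> real"
  assumes "mono_on {a..b} f" "a < b"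
  shows "(f \<longlongrightarrow> Sup (f ` {a..<b})) (at_left b)"
proof -
  have "(f \<longlongrightarrow> Sup (f ` ({..<b} \<inter> {a..b}))) (at b within ({..<b} \<inter> {a..b}))"
    using assms by (intro Lim_left_bound[where K = "f b"]; simp add: mono_onD)
  moreover have "{..<b} \<inter> {a..b} = {a..<b}" by auto
  moreover have "at b within {a..<b} = at_left b"
    by (rule at_within_nhd[of _ "{a<..}"]) (use assms in auto)
  ultimately show ?thesis by simp
qed

lemma tendsto_at_right_Inf_mono_on:
  fixes f :: "real \<Rightarrow> real"
  assumes "mono_on {a..b} f" "a < b"
  shows "(f \<longlongrightarrow> Inf (f ` {a<..b})) (at_right a)"
proof -
  have "(f \<longlongrightarrow> Inf (f ` ({a<..} \<inter> {a..b}))) (at a within ({a<..} \<inter> {a..b}))"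
    using assms by (intro Lim_right_bound[where K = "f a"]; simp add: mono_onD)
  moreover have "{a<..} \<inter> {a..b} = {a<..b}" by auto
  moreover have "at a within {a<..b} = at_right a"
    by (rule at_within_nhd[of _ "{..<b}"]) (use assms in auto)
  ultimately show ?thesis by simp
qed

lemma Lim_at_left_eq_Sup:
  fixes rho :: "real \<Rightarrow> real"
  assumes "mono_on {a..b} (\<lambda>t. rho t / zeta t)" "-1 < a" "a < b" "b < 1"
  shows "Lim (at_left b) rho = Sup ((\<lambda>t. rho t / zeta t) ` {a..<b}) * zeta b"
proof -
  have "(zeta \<longlongrightarrow> zeta b) (at_left b)"
    using assms by (intro continuous_on_Icc_at_leftD[of a] continuous_on_zeta) auto
  with tendsto_at_left_Sup_mono_on[OF assms(1,3)]
  have "((\<lambda>t. rho t / zeta t * zeta t) \<longlongrightarrow> Sup ((\<lambda>t. rho t / zeta t) ` {a..<b}) * zeta b) (at_left b)"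
    by (rule tendsto_mult)
  moreover have "\<forall>\<^sub>F t in at_left b. rho t / zeta t * zeta t = rho t"
    using eventually_at_left_real[OF assms(3)]
  proof eventually_elim
    case (elim t)
    then have "0 < zeta t" using assms by (intro zeta_pos) auto
    then show ?case by simp
  qed
  ultimately have "(rho \<longlongrightarrow> Sup ((\<lambda>t. rho t / zeta t) ` {a..<b}) * zeta b) (at_left b)"
    by (rule Lim_transform_eventually)
  then show ?thesis by (intro tendsto_Lim) simp
qed

lemma Lim_at_right_eq_Inf:
  fixes rho :: "real \<Rightarrow> real"
  assumes "mono_on {a..b} (\<lambda>t. rho t / zeta t)" "-1 < a" "a < b" "b < 1"
  shows "Lim (at_right a) rho = Inf ((\<lambda>t. rho t / zeta t) ` {a<..b}) * zeta a"
proof -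
  have "(zeta \<longlongrightarrow> zeta a) (at_right a)"
    using assms by (intro continuous_on_Icc_at_rightD[of a b] continuous_on_zeta) auto
  with tendsto_at_right_Inf_mono_on[OF assms(1,3)]
  have "((\<lambda>t. rho t / zeta t * zeta t) \<longlongrightarrow> Inf ((\<lambda>t. rho t / zeta t) ` {a<..b}) * zeta a) (at_right a)"
    by (rule tendsto_mult)
  moreover have "\<forall>\<^sub>F t in at_right a. rho t / zeta t * zeta t = rho t"
    using eventually_at_right_real[OF assms(3)]
  proof eventually_elim
    case (elim t)
    then have "0 < zeta t" using assms by (intro zeta_pos) auto
    then show ?case by simp
  qed
  ultimately have "(rho \<longlongrightarrow> Inf ((\<lambda>t. rho t / zeta t) ` {a<..b}) * zeta a) (at_right a)"
    by (rule Lim_transform_eventually)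
  then show ?thesis by (intro tendsto_Lim) simp
qed

lemma mono_on_of_mono_on_div_zeta:
  fixes rho :: "real \<Rightarrow> real"
  assumes "0 \<le> a" "b < 1" "\<forall>t\<in>{a..b}. 0 \<le> rho t" "mono_on {a..b} (\<lambda>t. rho t / zeta t)"
  shows "mono_on {a..b} rho"
proof (rule mono_onI)
  fix s t assume st: "s \<in> {a..b}" "t \<in> {a..b}" "s \<le> t"
  then have "0 < zeta s" "0 < zeta t" using assms by (auto intro!: zeta_pos)
  have "rho s = rho s / zeta s * zeta s" using \<open>0 < zeta s\<close> by simp
  also have "\<dots> \<le> rho t / zeta t * zeta s"
    using mono_onD[OF assms(4) st] \<open>0 < zeta s\<close> by (intro mult_right_mono) auto
  also have "\<dots> \<le> rho t / zeta t * zeta t"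
    using st assms \<open>0 < zeta t\<close> by (intro mult_left_mono zeta_mono) auto
  also have "\<dots> = rho t" using \<open>0 < zeta t\<close> by simp
  finally show "rho s \<le> rho t" .
qed

lemma Inf_Sup_div_zeta:
  fixes rho :: "real \<Rightarrow> real"
  assumes "mono_on {a..b} (\<lambda>t. rho t / zeta t)" "\<forall>t\<in>{a..b}. 0 \<le> rho t" "-1 < a" "a < b" "b < 1"
  defines "qa \<equiv> Inf ((\<lambda>t. rho t / zeta t) ` {a<..b})"
    and "qb \<equiv> Sup ((\<lambda>t. rho t / zeta t) ` {a..<b})"
  shows "0 \<le> qa" "qa \<le> qb" "\<forall>t\<in>{a..<b}. rho t \<le> qb * zeta t"
    and "qb = 0 \<longleftrightarrow> (\<forall>t\<in>{a..<b}. rho t = 0)"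
proof -
  define Q where "Q t = rho t / zeta t" for t
  have zeta_pos': "0 < zeta t" if "t \<in> {a..b}" for t
    using that assms by (intro zeta_pos) auto
  have Q_mono: "Q s \<le> Q t" if "s \<in> {a..b}" "t \<in> {a..b}" "s \<le> t" for s t
    using mono_onD[OF assms(1) that] unfolding Q_def .
  have Q_nonneg: "0 \<le> Q t" if "t \<in> {a..b}" for t
    using that assms(2) zeta_pos'[OF that] unfolding Q_def by simp
  have Q_le: "Q t \<le> qb" if "t \<in> {a..<b}" for t
    unfolding qb_def Q_def[symmetric] using that assms Q_mono
    by (intro cSup_upper bdd_aboveI2[of _ _ "Q b"]) auto
  have le_Q: "qa \<le> Q t" if "t \<in> {a<..b}" for t
    unfolding qa_def Q_def[symmetric] using that assms Q_mono
    by (intro cInf_lower bdd_belowI2[of _ "Q a"]) auto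
  show "0 \<le> qa" unfolding qa_def Q_def[symmetric] using assms Q_nonneg by (intro cInf_greatest) auto
  show "qa \<le> qb" using le_Q[of "(a + b) / 2"] Q_le[of "(a + b) / 2"] assms by auto
  show rho_le: "\<forall>t\<in>{a..<b}. rho t \<le> qb * zeta t"
  proof
    fix t assume t: "t \<in> {a..<b}"
    then have "0 < zeta t" using zeta_pos' by simp
    then have "rho t = Q t * zeta t" unfolding Q_def by simp
    also have "\<dots> \<le> qb * zeta t" using Q_le[OF t] \<open>0 < zeta t\<close> by simp
    finally show "rho t \<le> qb * zeta t" .
  qed
  show "qb = 0 \<longleftrightarrow> (\<forall>t\<in>{a..<b}. rho t = 0)"
  proof
    assume "qb = 0"
    then show "\<forall>t\<in>{a..<b}. rho t = 0" using rho_le assms(2) by force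
  next
    assume "\<forall>t\<in>{a..<b}. rho t = 0"
    then have "(\<lambda>t. rho t / zeta t) ` {a..<b} = {0}" using assms by auto
    then show "qb = 0" unfolding qb_def by simp
  qed
qed

lemma rho_tilde_sum_eq:
  fixes rho :: "real \<Rightarrow> real"
  assumes "mono_on {a..b} (\<lambda>t. rho t / zeta t)" "-1 < a" "a < b" "b < 1"
  shows "2 + a * rho_tilde_right rho a + b * rho_tilde_left rho b
           = zeta a + zeta b - 2 + Sup ((\<lambda>t. rho t / zeta t) ` {a..<b}) * (b * zeta b)
             + a * (Inf ((\<lambda>t. rho t / zeta t) ` {a<..b}) * zeta a)"
proof -
  have "a * (a * zeta a) = zeta a - 2" "b * (b * zeta b) = zeta b - 2"
    using assms power2_mult_zeta[of a] power2_mult_zeta[of b] by (simp_all add: power2_eq_square mult.assoc)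
  then show ?thesis
    unfolding rho_tilde_left_def rho_tilde_right_def distrib_left
      Lim_at_left_eq_Sup[OF assms] Lim_at_right_eq_Inf[OF assms]
    by (simp add: mult_ac)
qed

theorem mainTheorem10:
  fixes rho :: "real \<Rightarrow> real" and a b :: real
  assumes "0 \<le> a" and "a < b" and "b < 1"
    and "\<forall>t\<in>{a..b}. 0 \<le> rho t"
    and "mono_on {a..b} (\<lambda>t. rho t / zeta t)"
    and "bounded ((\<lambda>t. rho t / zeta t) ` {a..b})"
  shows "(b * zeta b - a * zeta a) * mhat (\<lambda>t. rho t / zeta t) a b
           \<le> 2 + a * rho_tilde_right rho a + b * rho_tilde_left rho b
       \<and> ((b * zeta b - a * zeta a) * mhat (\<lambda>t. rho t / zeta t) a b
           = 2 + a * rho_tilde_right rho a + b * rho_tilde_left rho b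
         \<longleftrightarrow> (\<forall>t\<in>{a..<b}. rho t = 0))"
proof -
  define qa qb where "qa = Inf ((\<lambda>t. rho t / zeta t) ` {a<..b})"
    and "qb = Sup ((\<lambda>t. rho t / zeta t) ` {a..<b})"
  have "-1 < a" using assms by simp
  note quotient = Inf_Sup_div_zeta[OF assms(5,4) this assms(2,3), folded qa_def qb_def]
  have rhs: "2 + a * rho_tilde_right rho a + b * rho_tilde_left rho b
      = zeta a + zeta b - 2 + qb * (b * zeta b) + a * (qa * zeta a)"
    unfolding qa_def qb_def using assms by (intro rho_tilde_sum_eq) auto
  have "rho integrable_on {a..b}"
    using assms by (intro integrable_on_mono_on mono_on_of_mono_on_div_zeta[OF assms(1,3,4,5)])
  note bound = mult_mhat_le[OF assms(1-4) this quotient(3)]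
  show ?thesis
  proof (cases "qb = 0")
    case True
    with quotient have "qa = 0" "\<forall>t\<in>{a..<b}. rho t = 0" by auto
    with True show ?thesis unfolding rhs using mult_mhat_zero[OF assms(1-3)] by simp
  next
    case False
    with quotient(1,2) have "0 < qb" by simp
    moreover have "0 \<le> a * (qa * zeta a)" using assms quotient(1) zeta_pos[of a] by simp
    ultimately show ?thesis unfolding rhs using bound(2) quotient(4) False by fastforce
  qed
qed

end
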